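(* Let $d\in\mathbb{N}$, $d\geq 2$, $r>0$ and let $A\subseteq \mathbb{R}^{d}$ be $r$-separated. Then there exists a $16\max\{\frac{3d}{r},1\}$-bilipschitz mapping $\Phi\colon \mathbb{R}^{d}\to\mathbb{R}^{d}$ such that $\Phi(A)\subseteq \mathbb{Z}^{d}$.
   Context: $A$ is $r$-separated if $\|a-a'\|\geq r$ for all distinct $a,a'\in A$ (Euclidean norm). A mapping is $L$-bilipschitz if it is injective and both it and its inverse are $L$-Lipschitz. *)

theory Defs
  imports "HOL-Analysis.Analysis"
begin

definition r_separated :: "real \<Rightarrow> 'a::real_normed_vector set \<Rightarrow> bool" where
  "r_separated r A \<longleftrightarrow> (\<forall>a\<in>A. \<forall>a'\<in>A. a \<noteq> a' \<longrightarrow> norm (a - a') \<ge> r)"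

definition bilipschitz :: "real \<Rightarrow> ('a::metric_space \<Rightarrow> 'b::metric_space) \<Rightarrow> bool" where
  "bilipschitz L f \<longleftrightarrow> inj f \<and> lipschitz_on L UNIV f \<and> lipschitz_on L (range f) (inv f)"

definition integer_lattice :: "(real ^ 'n) set" where
  "integer_lattice = {x. \<forall>i. x $ i \<in> \<int>}"

end

theory Submission
  imports Defs
begin

text \<open>Scaling by \<open>l = max (3d/r) 1\<close> makes the points \<open>3d\<close>-separated. Around each scaled point \<open>b\<close>
  a tent of radius \<open>3d/2\<close> moves \<open>b\<close> to the lattice point below it, a displacement of norm at
  most \<open>d\<close>. The tents have disjoint supports, so together they form a \<open>2/3\<close>-Lipschitz perturbation
  of the identity, and the identity plus such a perturbation is bilipschitz with constants
  \<open>5/3\<close> and \<open>3\<close>.\<close>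

lemma r_separated_mono: "r_separated r A \<Longrightarrow> s \<le> r \<Longrightarrow> r_separated s A"
  unfolding r_separated_def by force

lemma r_separated_scaleR:
  assumes "r_separated r A" "l \<ge> 0"
  shows "r_separated (l * r) ((*\<^sub>R) l ` A)"
  using assms unfolding r_separated_def
  by (auto simp: scaleR_diff_right[symmetric] intro: mult_left_mono)

lemma r_separated_near_unique:
  assumes "r_separated (2 * R) B" "b \<in> B" "b' \<in> B" "dist x b < R" "dist x b' < R"
  shows "b = b'"
proof (rule ccontr)
  assume "b \<noteq> b'"
  then have "2 * R \<le> dist b b'"
    using assms(1-3) by (simp add: r_separated_def dist_norm)
  also have "\<dots> \<le> dist x b + dist x b'"
    by (rule dist_triangle3)
  finally show False
    using assms(4,5) by linarith
qed

text \<open>For \<open>2R\<close>-separated \<open>B\<close> the balls of radius \<open>R\<close> around the points of \<open>B\<close> are disjoint,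
  so the point chosen by \<open>SOME\<close> is the unique one near \<open>x\<close>.\<close>
definition tent_map :: "real \<Rightarrow> 'a set \<Rightarrow> ('a \<Rightarrow> 'a) \<Rightarrow> 'a \<Rightarrow> 'a::real_normed_vector" where
  "tent_map R B w x =
    (if \<exists>b\<in>B. dist x b < R
     then let b = SOME b. b \<in> B \<and> dist x b < R in ((R - dist x b) / R) *\<^sub>R w b
     else 0)"

lemma tent_map_near:
  assumes "r_separated (2 * R) B" "b \<in> B" "dist x b < R"
  shows "tent_map R B w x = ((R - dist x b) / R) *\<^sub>R w b"
proof -
  have "(SOME b. b \<in> B \<and> dist x b < R) \<in> B \<and> dist x (SOME b. b \<in> B \<and> dist x b < R) < R"
    using assms(2,3) by (rule someI[of "\<lambda>b. b \<in> B \<and> dist x b < R", OF conjI])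
  then have "(SOME b. b \<in> B \<and> dist x b < R) = b"
    using r_separated_near_unique[OF assms(1) _ assms(2) _ assms(3)] by blast
  then show ?thesis
    using assms(2,3) by (auto simp: tent_map_def)
qed

lemma tent_map_far: "\<not> (\<exists>b\<in>B. dist x b < R) \<Longrightarrow> tent_map R B w x = 0"
  by (simp add: tent_map_def)

lemma norm_tent_map_near_le:
  assumes "r_separated (2 * R) B" "\<forall>b\<in>B. norm (w b) \<le> M" "b \<in> B" "dist x b < R"
  shows "norm (tent_map R B w x) \<le> M / R * (R - dist x b)"
proof -
  have "R > 0"
    using assms(4) zero_le_dist[of x b] by linarith
  then have "norm (tent_map R B w x) = (R - dist x b) / R * norm (w b)"
    using assms(4) by (simp add: tent_map_near[OF assms(1,3,4)])
  also have "\<dots> \<le> (R - dist x b) / R * M"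
    using assms(2,3) \<open>R > 0\<close> \<open>dist x b < R\<close> by (intro mult_left_mono) auto
  finally show ?thesis
    by (simp add: mult.commute)
qed

lemma tent_map_dist_le_near:
  assumes sep: "r_separated (2 * R) B" and R: "R > 0" and w: "\<forall>b\<in>B. norm (w b) \<le> M"
    and b: "b \<in> B" "dist x b < R"
  shows "dist (tent_map R B w x) (tent_map R B w y) \<le> M / R * dist x y"
proof -
  let ?T = "tent_map R B w"
  have "M \<ge> 0"
    using w b by (meson norm_ge_zero order_trans)
  then have M: "M / R \<ge> 0"
    using R by simp
  have Tx: "norm (?T x) \<le> M / R * (R - dist x b)"
    using norm_tent_map_near_le[OF sep w b] .
  consider "dist y b < R" | b' where "b' \<in> B" "b' \<noteq> b" "dist y b' < R" | "\<not> (\<exists>b\<in>B. dist y b < R)"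
    by blast
  then show ?thesis
  proof cases
    case 1
    have "?T x - ?T y = ((dist y b - dist x b) / R) *\<^sub>R w b"
      using tent_map_near[OF sep b] tent_map_near[OF sep b(1) 1]
      by (simp add: diff_divide_distrib scaleR_diff_left)
    then have "dist (?T x) (?T y) = \<bar>dist y b - dist x b\<bar> / R * norm (w b)"
      using R by (simp add: dist_norm)
    also have "\<dots> \<le> dist x y / R * M"
      using w b R dist_triangle3[of y b x] dist_triangle3[of x b y] dist_commute[of x y]
      by (intro mult_mono divide_right_mono) auto
    finally show ?thesis
      by (simp add: mult.commute)
  next
    case (2 b')
    have "2 * R \<le> dist b b'"
      using sep b(1) 2 by (simp add: r_separated_def dist_norm)
    also have "\<dots> \<le> dist x b + dist x y + dist y b'"
      using dist_triangle3[of b b' x] dist_triangle[of x b' y] by linarith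
    finally have gap: "(R - dist x b) + (R - dist y b') \<le> dist x y"
      by linarith
    have "dist (?T x) (?T y) \<le> norm (?T x) + norm (?T y)"
      by (simp add: dist_norm norm_triangle_ineq4)
    also have "\<dots> \<le> M / R * (R - dist x b) + M / R * (R - dist y b')"
      using Tx norm_tent_map_near_le[OF sep w 2(1,3)] by (rule add_mono)
    also have "\<dots> = M / R * ((R - dist x b) + (R - dist y b'))"
      by (rule distrib_left[symmetric])
    also have "\<dots> \<le> M / R * dist x y"
      using gap M by (rule mult_left_mono)
    finally show ?thesis .
  next
    case 3
    have "R \<le> dist y b"
      using 3 b(1) by auto
    also have "\<dots> \<le> dist x y + dist x b"
      by (rule dist_triangle3)
    finally have "R - dist x b \<le> dist x y"
      by linarith
    then show ?thesis
      using Tx M mult_left_mono[of "R - dist x b" "dist x y" "M / R"]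
      by (simp add: tent_map_far[OF 3])
  qed
qed

lemma tent_map_lipschitz:
  assumes sep: "r_separated (2 * R) B" and R: "R > 0" and w: "\<forall>b\<in>B. norm (w b) \<le> M"
    and M: "M \<ge> 0"
  shows "(M / R)-lipschitz_on UNIV (tent_map R B w)"
proof (rule lipschitz_onI)
  fix x y
  show "dist (tent_map R B w x) (tent_map R B w y) \<le> M / R * dist x y"
  proof (cases "\<exists>b\<in>B. dist x b < R \<or> dist y b < R")
    case True
    then obtain b where b: "b \<in> B" and "dist x b < R \<or> dist y b < R"
      by blast
    then consider "dist x b < R" | "dist y b < R"
      by blast
    then show ?thesis
    proof cases
      case 2
      show ?thesis
        using tent_map_dist_le_near[OF sep R w b 2, of x] by (simp add: dist_commute)
    qed (rule tent_map_dist_le_near[OF sep R w b])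
  next
    case False
    then show ?thesis
      using M R by (simp add: tent_map_far)
  qed
qed (use M R in simp)

lemma bilipschitzI:
  assumes "L \<ge> 0"
    and "\<And>x y. dist (f x) (f y) \<le> L * dist x y"
    and "\<And>x y. dist x y \<le> L * dist (f x) (f y)"
  shows "bilipschitz L f"
proof -
  have "inj f"
  proof (rule injI)
    fix x y
    assume "f x = f y"
    then show "x = y"
      using assms(3)[of x y] by simp
  qed
  moreover have "L-lipschitz_on (range f) (inv f)"
    by (rule lipschitz_onI) (auto simp: \<open>inj f\<close> assms(1,3))
  ultimately show ?thesis
    unfolding bilipschitz_def using assms(1,2) by (simp add: lipschitz_onI)
qed

lemma bilipschitz_scaled_perturbation:
  fixes g :: "'a::real_normed_vector \<Rightarrow> 'a"
  assumes g: "c-lipschitz_on UNIV g" and "c < 1" and "l > 0"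
    and "l * (1 + c) \<le> L" and "1 \<le> L * l * (1 - c)"
  shows "bilipschitz L (\<lambda>x. l *\<^sub>R x + g (l *\<^sub>R x))"
proof (rule bilipschitzI)
  let ?\<Phi> = "\<lambda>x. l *\<^sub>R x + g (l *\<^sub>R x)"
  have c: "c \<ge> 0"
    using lipschitz_on_nonneg[OF g] .
  have scale: "dist (l *\<^sub>R x) (l *\<^sub>R y) = l * dist x y" for x y :: 'a
    using \<open>l > 0\<close> by (simp add: dist_norm flip: scaleR_diff_right)
  have g_le: "dist (g (l *\<^sub>R x)) (g (l *\<^sub>R y)) \<le> c * (l * dist x y)" for x y :: 'a
    using lipschitz_onD[OF g, of "l *\<^sub>R x" "l *\<^sub>R y"] by (simp add: scale)
  show "L \<ge> 0"
    using c \<open>l > 0\<close> assms(4) zero_le_mult_iff[of l "1 + c"] by linarith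
  fix x y
  have "dist (?\<Phi> x) (?\<Phi> y) \<le> dist (l *\<^sub>R x) (l *\<^sub>R y) + dist (g (l *\<^sub>R x)) (g (l *\<^sub>R y))"
    by (rule dist_triangle_add)
  also have "\<dots> \<le> l * (1 + c) * dist x y"
    using g_le[of x y] by (simp add: scale algebra_simps)
  also have "\<dots> \<le> L * dist x y"
    using assms(4) by (simp add: mult_right_mono)
  finally show "dist (?\<Phi> x) (?\<Phi> y) \<le> L * dist x y" .
  have "l * dist x y = norm ((?\<Phi> x - ?\<Phi> y) - (g (l *\<^sub>R x) - g (l *\<^sub>R y)))"
    by (simp add: flip: scale) (simp add: dist_norm)
  also have "\<dots> \<le> dist (?\<Phi> x) (?\<Phi> y) + dist (g (l *\<^sub>R x)) (g (l *\<^sub>R y))"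
    unfolding dist_norm by (rule norm_triangle_ineq4)
  finally have lower: "l * (1 - c) * dist x y \<le> dist (?\<Phi> x) (?\<Phi> y)"
    using g_le[of x y] by (simp add: algebra_simps)
  have "dist x y \<le> L * (l * (1 - c) * dist x y)"
    using mult_right_mono[OF assms(5) zero_le_dist[of x y]] by (simp add: mult.assoc)
  also have "\<dots> \<le> L * dist (?\<Phi> x) (?\<Phi> y)"
    using lower \<open>L \<ge> 0\<close> by (rule mult_left_mono)
  finally show "dist x y \<le> L * dist (?\<Phi> x) (?\<Phi> y)" .
qed

definition lattice_floor :: "real ^ 'n \<Rightarrow> real ^ 'n" where
  "lattice_floor x = (\<chi> i. of_int \<lfloor>x $ i\<rfloor>)"

lemma lattice_floor_in_integer_lattice: "lattice_floor x \<in> integer_lattice"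
  by (simp add: lattice_floor_def integer_lattice_def)

lemma norm_lattice_floor_diff_le: "norm (lattice_floor x - x) \<le> real CARD('n)"
  for x :: "real ^ 'n"
proof -
  have "norm (lattice_floor x - x) \<le> (\<Sum>i\<in>UNIV. \<bar>(lattice_floor x - x) $ i\<bar>)"
    by (rule norm_le_l1_cart)
  also have "\<dots> \<le> (\<Sum>i\<in>(UNIV :: 'n set). 1)"
  proof (rule sum_mono)
    fix i
    have "(lattice_floor x - x) $ i = of_int \<lfloor>x $ i\<rfloor> - x $ i"
      by (simp add: lattice_floor_def)
    then show "\<bar>(lattice_floor x - x) $ i\<bar> \<le> 1"
      using of_int_floor_le[of "x $ i"] real_of_int_floor_add_one_gt[of "x $ i"] by linarith
  qed
  finally show ?thesis
    by simp
qed

theorem lemma4p1: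
  fixes A :: "(real ^ 'n) set" and r :: real
  assumes "CARD('n) \<ge> 2" and "r > 0" and "r_separated r A"
  shows "\<exists>\<Phi> :: real ^ 'n \<Rightarrow> real ^ 'n.
           bilipschitz (16 * max (3 * real CARD('n) / r) 1) \<Phi> \<and> \<Phi> ` A \<subseteq> integer_lattice"
proof -
  define d where "d = real CARD('n)"
  define l where "l = max (3 * d / r) 1"
  define R where "R = 3 * d / 2"
  define T where "T = tent_map R ((*\<^sub>R) l ` A) (\<lambda>b. lattice_floor b - b)"
  define \<Phi> where "\<Phi> = (\<lambda>x. l *\<^sub>R x + T (l *\<^sub>R x))"
  have "d \<ge> 2" "l \<ge> 1"
    using assms(1) by (auto simp: d_def l_def)
  then have R: "R > 0" and "2 * R \<le> l * r"
    using assms(2) by (auto simp: R_def l_def field_simps max_def)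
  moreover have "r_separated (l * r) ((*\<^sub>R) l ` A)"
    using r_separated_scaleR[OF assms(3)] \<open>l \<ge> 1\<close> by simp
  ultimately have sep: "r_separated (2 * R) ((*\<^sub>R) l ` A)"
    using r_separated_mono by blast
  have "(d / R)-lipschitz_on UNIV T"
    unfolding T_def using \<open>d \<ge> 2\<close> norm_lattice_floor_diff_le
    by (intro tent_map_lipschitz[OF sep R]) (auto simp: d_def)
  moreover have "d / R = 2 / 3"
    using \<open>d \<ge> 2\<close> by (simp add: R_def)
  ultimately have bil: "bilipschitz (16 * l) \<Phi>"
    unfolding \<Phi>_def using \<open>l \<ge> 1\<close>
    by (intro bilipschitz_scaled_perturbation) (auto intro: order_trans[of 1 l])
  have "\<Phi> a = lattice_floor (l *\<^sub>R a)" if "a \<in> A" for a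
    using tent_map_near[OF sep imageI[OF that], of "l *\<^sub>R a"] R by (simp add: \<Phi>_def T_def)
  then have "\<Phi> ` A \<subseteq> integer_lattice"
    using lattice_floor_in_integer_lattice by auto
  with bil show ?thesis
    unfolding d_def l_def by blast
qed

end
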